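(* Let $W$ be a connected graphon. Then $\lambda_W\ge \dfrac{h_W^2}{8}$.
   Context: Let $I=[0,1]$ with Lebesgue measure $\mu_L$. A graphon is a measurable function $W:I^2\to I$ with $W(x,y)=W(y,x)$ for all $x,y$. Its degree function is $d_W(x)=\int_0^1 W(x,y)\,dy$. For measurable $A,B\subseteq I$ put $e_W(A,B)=\int_{A\times B}W$ and $\mathrm{vol}_W(A)=e_W(A,I)$. $W$ is connected if $e_W(A,A^c)\neq 0$ for every measurable $A\subseteq I$ with $0<\mu_L(A)<1$. The Cheeger constant is $h_W=\inf_{A:\,0<\mu_L(A)<1}\frac{e_W(A,A^c)}{\min\{\mathrm{vol}_W(A),\mathrm{vol}_W(A^c)\}}$. Let $\nu$ be the measure on $I$ with $d\nu=d_W\,d\mu_L$. For $f\in L^2(I,\nu)$ write $\|f\|_v^2=\int_0^1 f(x)^2d_W(x)\,dx$ and $\|df\|_e^2=\int_0^1\int_x^1 (f(y)-f(x))^2W(x,y)\,dy\,dx$. The bottom of the spectrum of the Laplacian is $\lambda_W=\inf\{\|df\|_e^2/\|f\|_v^2:\ f\in L^2(I,\nu),\ \int_0^1 f\,d_W\,dx=0,\ \|f\|_v\neq 0\}$. *)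

theory Defs
  imports "HOL-Analysis.Analysis"
begin

text \<open>The unit interval I = [0,1] with Lebesgue measure. A graphon is represented
  by a function W :: real => real => real whose values on I x I matter.\<close>

abbreviation unitI :: "real set" where "unitI \<equiv> {0..1}"

definition graphon :: "(real \<Rightarrow> real \<Rightarrow> real) \<Rightarrow> bool" where
  "graphon W \<longleftrightarrow>
     (\<lambda>p. W (fst p) (snd p)) \<in> borel_measurable (lebesgue_on (unitI \<times> unitI)) \<and>
     (\<forall>x\<in>unitI. \<forall>y\<in>unitI. 0 \<le> W x y \<and> W x y \<le> 1) \<and>
     (\<forall>x\<in>unitI. \<forall>y\<in>unitI. W x y = W y x)"

definition degW :: "(real \<Rightarrow> real \<Rightarrow> real) \<Rightarrow> real \<Rightarrow> real" where
  "degW W x = integral\<^sup>L (lebesgue_on unitI) (\<lambda>y. W x y)"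

definition eW :: "(real \<Rightarrow> real \<Rightarrow> real) \<Rightarrow> real set \<Rightarrow> real set \<Rightarrow> real" where
  "eW W A B = integral\<^sup>L (lebesgue_on (A \<times> B)) (\<lambda>p. W (fst p) (snd p))"

definition volW :: "(real \<Rightarrow> real \<Rightarrow> real) \<Rightarrow> real set \<Rightarrow> real" where
  "volW W A = eW W A unitI"

definition meas_subset :: "real set \<Rightarrow> bool" where
  "meas_subset A \<longleftrightarrow> A \<in> sets lebesgue \<and> A \<subseteq> unitI"

definition connected_graphon :: "(real \<Rightarrow> real \<Rightarrow> real) \<Rightarrow> bool" where
  "connected_graphon W \<longleftrightarrow>
     (\<forall>A. meas_subset A \<and> 0 < measure lebesgue A \<and> measure lebesgue A < 1
          \<longrightarrow> eW W A (unitI - A) \<noteq> 0)"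

definition cheeger :: "(real \<Rightarrow> real \<Rightarrow> real) \<Rightarrow> real" where
  "cheeger W = Inf {eW W A (unitI - A) / min (volW W A) (volW W (unitI - A)) | A.
                      meas_subset A \<and> 0 < measure lebesgue A \<and> measure lebesgue A < 1}"

definition L2nu :: "(real \<Rightarrow> real \<Rightarrow> real) \<Rightarrow> (real \<Rightarrow> real) \<Rightarrow> bool" where
  "L2nu W f \<longleftrightarrow> f \<in> borel_measurable (lebesgue_on unitI) \<and>
     integrable (lebesgue_on unitI) (\<lambda>x. (f x)\<^sup>2 * degW W x)"

definition vnorm2 :: "(real \<Rightarrow> real \<Rightarrow> real) \<Rightarrow> (real \<Rightarrow> real) \<Rightarrow> real" where
  "vnorm2 W f = integral\<^sup>L (lebesgue_on unitI) (\<lambda>x. (f x)\<^sup>2 * degW W x)"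

definition enorm2 :: "(real \<Rightarrow> real \<Rightarrow> real) \<Rightarrow> (real \<Rightarrow> real) \<Rightarrow> real" where
  "enorm2 W f = integral\<^sup>L (lebesgue_on unitI)
      (\<lambda>x. integral\<^sup>L (lebesgue_on {x..1}) (\<lambda>y. (f y - f x)\<^sup>2 * W x y))"

definition lambdaW :: "(real \<Rightarrow> real \<Rightarrow> real) \<Rightarrow> real" where
  "lambdaW W = Inf {enorm2 W f / vnorm2 W f | f.
      L2nu W f \<and> integral\<^sup>L (lebesgue_on unitI) (\<lambda>x. f x * degW W x) = 0 \<and> vnorm2 W f \<noteq> 0}"

end

theory Submission
  imports Defs "HOL-Probability.Distribution_Functions"
begin

text \<open>
  We prove the stronger bound \<open>h\<^sup>2/2 \<le> \<lambda>\<close>, by the continuous version of the proof of the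
  Cheeger inequality for graphs. Let \<open>E(p)\<close> be the energy of \<open>p\<close> summed over all ordered pairs,
  i.e. twice \<open>\<parallel>dp\<parallel>\<^sub>e\<^sup>2\<close>. For \<open>p \<ge> 0\<close> whose superlevel sets \<open>S\<^sub>t = {p\<^sup>2 > t}\<close> never carry more
  than half of the volume, the coarea formula and the definition of \<open>h\<close> give
  \<open>2h\<parallel>p\<parallel>\<^sub>v\<^sup>2 \<le> \<integral>\<^sub>t e(S\<^sub>t, I - S\<^sub>t) + e(I - S\<^sub>t, S\<^sub>t) dt = \<integral>\<integral> |p(x)\<^sup>2 - p(y)\<^sup>2| W(x,y)\<close>, while the
  pointwise AM-GM bound \<open>h|a\<^sup>2 - b\<^sup>2| \<le> (a - b)\<^sup>2 + h\<^sup>2(a\<^sup>2 + b\<^sup>2)/2\<close> bounds the right-hand side by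
  \<open>E(p) + h\<^sup>2\<parallel>p\<parallel>\<^sub>v\<^sup>2\<close>; hence \<open>h\<^sup>2\<parallel>p\<parallel>\<^sub>v\<^sup>2 \<le> E(p)\<close>. Given \<open>f\<close> of mean zero, subtract a median \<open>m\<close> of \<open>f\<close>
  with respect to \<open>\<nu>\<close> and apply this to the positive and negative parts of \<open>f - m\<close>: their energies
  add up to at most \<open>E(f)\<close>, their norms add up to \<open>\<parallel>f - m\<parallel>\<^sub>v\<^sup>2 \<ge> \<parallel>f\<parallel>\<^sub>v\<^sup>2\<close>.

  All of this is carried out for a symmetric Borel version \<open>w\<close> of \<open>W\<close> with \<open>ennreal\<close>-valued
  integrals, so that Tonelli's theorem applies without integrability side conditions.
\<close>

section \<open>Borel versions of Lebesgue measurable functions\<close>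

lemma lebesgue_on_eq_lborel_AE:
  fixes h h0 :: "'a::euclidean_space \<Rightarrow> real"
  assumes S: "S \<in> sets borel" and h0[measurable]: "h0 \<in> borel_measurable borel"
    and ae: "AE x in lborel. x \<in> S \<longrightarrow> h x = h0 x" and out: "\<And>x. x \<notin> S \<Longrightarrow> h0 x = 0"
  shows "integral\<^sup>L (lebesgue_on S) h = integral\<^sup>L lborel h0"
    and "integrable (lebesgue_on S) h \<longleftrightarrow> integrable lborel h0"
    and "h \<in> borel_measurable (lebesgue_on S)"
proof -
  have S_lebesgue: "S \<in> sets lebesgue" using S by auto
  have ae_lebesgue: "AE x in lebesgue. h0 x = indicator S x *\<^sub>R h x"
    using AE_completion[OF ae] by eventually_elim (auto simp: out indicator_def)
  have h0_lebesgue: "h0 \<in> borel_measurable lebesgue" by (simp add: measurable_completion)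
  have hS: "(\<lambda>x. indicator S x *\<^sub>R h x) \<in> borel_measurable lebesgue"
    by (rule borel_measurable_AE[OF h0_lebesgue ae_lebesgue])
  then show "h \<in> borel_measurable (lebesgue_on S)"
    using S_lebesgue by (subst borel_measurable_restrict_space_iff) auto
  have "integral\<^sup>L (lebesgue_on S) h = integral\<^sup>L lebesgue (\<lambda>x. indicator S x *\<^sub>R h x)"
    using S_lebesgue by (subst integral_restrict_space) auto
  also have "\<dots> = integral\<^sup>L lebesgue h0"
    by (rule integral_cong_AE[OF hS h0_lebesgue]) (use ae_lebesgue in auto)
  finally show "integral\<^sup>L (lebesgue_on S) h = integral\<^sup>L lborel h0"
    by (simp add: integral_completion)
  have "integrable (lebesgue_on S) h \<longleftrightarrow> integrable lebesgue (\<lambda>x. indicator S x *\<^sub>R h x)"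
    using S_lebesgue by (subst integrable_restrict_space) auto
  also have "\<dots> \<longleftrightarrow> integrable lebesgue h0"
    by (rule integrable_cong_AE[OF hS h0_lebesgue]) (use ae_lebesgue in auto)
  finally show "integrable (lebesgue_on S) h \<longleftrightarrow> integrable lborel h0"
    by (simp add: integrable_completion)
qed

lemma lebesgue_on_borel_version:
  fixes f :: "'a::euclidean_space \<Rightarrow> real"
  assumes S: "S \<in> sets lebesgue" and f: "f \<in> borel_measurable (lebesgue_on S)"
  obtains u where "u \<in> borel_measurable borel" "AE x in lborel. x \<in> S \<longrightarrow> f x = u x"
proof -
  have "(\<lambda>x. indicator S x *\<^sub>R f x) \<in> borel_measurable lebesgue"
    using f S by (subst (asm) borel_measurable_restrict_space_iff) auto
  then obtain u where "u \<in> borel_measurable lborel" "AE x in lborel. indicator S x *\<^sub>R f x = u x"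
    using completion_ex_borel_measurable_real by blast
  then show thesis
    by (intro that[of u]) (auto elim: eventually_mono)
qed

lemma AE_lborel_pair_swap:
  assumes "AE p in (lborel :: ('a::euclidean_space \<times> 'b::euclidean_space) measure). P p"
  shows "AE p in lborel. P (snd p, fst p)"
proof -
  have swap_eq: "(lborel :: ('a \<times> 'b) measure) =
      distr (lborel \<Otimes>\<^sub>M lborel) (lborel \<Otimes>\<^sub>M lborel) (\<lambda>(x, y). (y, x))"
    by (metis lborel_pair.distr_pair_swap lborel_prod)
  have "AE p in distr (lborel \<Otimes>\<^sub>M lborel) (lborel \<Otimes>\<^sub>M lborel) (\<lambda>(x, y). (y, x)). P p"
    using assms by (simp only: swap_eq[symmetric])
  from AE_distrD[OF measurable_pair_swap' this] show ?thesis
    unfolding lborel_prod by (simp add: case_prod_beta')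
qed

section \<open>Medians and elementary inequalities\<close>

lemma (in finite_borel_measure) median_exists:
  "\<exists>m. 2 * measure M {m<..} \<le> measure M (space M) \<and> 2 * measure M {..<m} \<le> measure M (space M)"
proof (cases "measure M (space M) = 0")
  case True
  then show ?thesis
    using bounded_measure[of "{0<..}"] bounded_measure[of "{..<0}"] by auto
next
  case False
  define T where "T = measure M (space M)"
  have "0 < T" using False by (simp add: T_def zero_less_measure_iff)
  define A where "A = {t. T/2 \<le> cdf M t}"
  have "eventually (\<lambda>t. T/2 < cdf M t) at_top"
    using cdf_lim_at_top \<open>0 < T\<close> by (intro order_tendstoD(1)) (auto simp: T_def)
  then obtain t0 where "T/2 < cdf M t0" by (metis eventually_at_top_linorder order_refl)
  then have A_ne: "A \<noteq> {}" unfolding A_def by (auto intro!: exI[of _ t0])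
  have "eventually (\<lambda>t. cdf M t < T/2) at_bot"
    using cdf_lim_at_bot \<open>0 < T\<close> by (intro order_tendstoD(2)) auto
  then obtain b where b: "\<And>t. t \<le> b \<Longrightarrow> cdf M t < T/2" by (auto simp: eventually_at_bot_linorder)
  have A_bdd: "bdd_below A"
  proof
    fix a assume "a \<in> A"
    then show "b \<le> a" using b[of a] unfolding A_def by force
  qed
  define m where "m = Inf A"
  have cdf_m: "T/2 \<le> cdf M m"
  proof (rule tendsto_lowerbound)
    show "(cdf M \<longlongrightarrow> cdf M m) (at_right m)"
      using cdf_is_right_cont[of m] by (simp add: continuous_within)
    show "eventually (\<lambda>t. T/2 \<le> cdf M t) (at_right m)"
    proof (rule eventually_at_rightI[where b="m+1"])
      fix t assume "t \<in> {m<..<m+1}"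
      then obtain a where "a \<in> A" "a < t"
        using cInf_less_iff[OF A_ne A_bdd] unfolding m_def by auto
      then show "T/2 \<le> cdf M t" unfolding A_def using cdf_nondecreasing[of a t] by auto
    qed simp
  qed simp
  have below_m: "measure M {..<m} \<le> T/2"
  proof (rule tendsto_upperbound)
    show "(cdf M \<longlongrightarrow> measure M {..<m}) (at_left m)" by (rule cdf_at_left)
    show "eventually (\<lambda>t. cdf M t \<le> T/2) (at_left m)"
    proof (rule eventually_at_leftI[where a="m-1"])
      fix t assume "t \<in> {m-1<..<m}"
      then have "t \<notin> A" using cInf_lower[OF _ A_bdd, of t] unfolding m_def by force
      then show "cdf M t \<le> T/2" unfolding A_def by simp
    qed simp
  qed simp
  have "measure M {m<..} = T - cdf M m"
    using finite_measure_compl[of "{..m}"]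
    by (simp add: T_def cdf_def borel_UNIV M_is_borel Compl_eq_Diff_UNIV[symmetric])
  then show ?thesis
    using cdf_m below_m by (intro exI[of _ m]) (simp add: T_def)
qed

lemma pos_neg_part_diff_sq_le:
  fixes a b :: real
  shows "(max b 0 - max a 0)\<^sup>2 + (max (- b) 0 - max (- a) 0)\<^sup>2 \<le> (b - a)\<^sup>2"
  by (cases "0 \<le> a"; cases "0 \<le> b")
     (auto simp: power2_eq_square algebra_simps mult_nonneg_nonpos mult_nonpos_nonneg)

lemma diff_sq_le_sum_sq:
  fixes a b :: real
  shows "(a - b)\<^sup>2 \<le> 2 * a\<^sup>2 + 2 * b\<^sup>2"
  using zero_le_power2[of "a + b"] by (simp add: power2_eq_square algebra_simps)

lemma abs_diff_squares_le:
  fixes a b h :: real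
  assumes "0 \<le> h"
  shows "h * \<bar>a\<^sup>2 - b\<^sup>2\<bar> \<le> (a - b)\<^sup>2 + h\<^sup>2 / 2 * (a\<^sup>2 + b\<^sup>2)"
proof -
  have "h * \<bar>a\<^sup>2 - b\<^sup>2\<bar> = \<bar>a - b\<bar> * (h * \<bar>a + b\<bar>)"
    using assms by (simp add: power2_eq_square algebra_simps abs_mult[symmetric])
  also have "\<dots> \<le> (a - b)\<^sup>2 + (h * \<bar>a + b\<bar>)\<^sup>2 / 4"
    using zero_le_power2[of "\<bar>a - b\<bar> - h * \<bar>a + b\<bar> / 2"]
    by (simp add: power2_eq_square algebra_simps)
  also have "(h * \<bar>a + b\<bar>)\<^sup>2 / 4 \<le> h\<^sup>2 / 2 * (a\<^sup>2 + b\<^sup>2)"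
  proof -
    have "(a + b)\<^sup>2 \<le> 2 * a\<^sup>2 + 2 * b\<^sup>2" using diff_sq_le_sum_sq[of a "-b"] by (simp add: power2_eq_square algebra_simps)
    from mult_left_mono[OF this, of "h\<^sup>2"] show ?thesis
      by (simp add: algebra_simps)
  qed
  finally show ?thesis by simp
qed

lemma integrable_mult_weight_of_sq:
  fixes u d :: "'a \<Rightarrow> real"
  assumes [measurable]: "u \<in> borel_measurable M" "d \<in> borel_measurable M"
    and "integrable M (\<lambda>x. (u x)\<^sup>2 * d x)" "integrable M d" and d_nonneg: "\<And>x. 0 \<le> d x"
  shows "integrable M (\<lambda>x. u x * d x)"
proof (rule Bochner_Integration.integrable_bound)
  show "integrable M (\<lambda>x. (u x)\<^sup>2 * d x + d x)" using assms by simp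
  show "AE x in M. norm (u x * d x) \<le> norm ((u x)\<^sup>2 * d x + d x)"
  proof (rule AE_I2)
    fix x
    have "\<bar>u x\<bar> \<le> (u x)\<^sup>2 + 1"
      using zero_le_power2[of "\<bar>u x\<bar> - 1/2"] by (simp add: power2_eq_square algebra_simps)
    from mult_right_mono[OF this d_nonneg] show "norm (u x * d x) \<le> norm ((u x)\<^sup>2 * d x + d x)"
      using d_nonneg[of x] by (simp add: abs_mult distrib_right)
  qed
qed simp

lemma integral_sq_weight_le_shift:
  fixes u d :: "'a \<Rightarrow> real"
  assumes [measurable]: "u \<in> borel_measurable M" "d \<in> borel_measurable M"
    and sq: "integrable M (\<lambda>x. (u x)\<^sup>2 * d x)" and d: "integrable M d" "\<And>x. 0 \<le> d x"
    and mean_zero: "(\<integral>x. u x * d x \<partial>M) = 0"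
  shows "integrable M (\<lambda>x. (u x - m)\<^sup>2 * d x)"
    and "(\<integral>x. (u x)\<^sup>2 * d x \<partial>M) \<le> (\<integral>x. (u x - m)\<^sup>2 * d x \<partial>M)"
proof -
  have ud: "integrable M (\<lambda>x. u x * d x)"
    by (rule integrable_mult_weight_of_sq[OF assms(1-2) sq d])
  have expand: "(u x - m)\<^sup>2 * d x = (u x)\<^sup>2 * d x - 2 * m * (u x * d x) + m\<^sup>2 * d x" for x
    by (simp add: power2_eq_square algebra_simps)
  show "integrable M (\<lambda>x. (u x - m)\<^sup>2 * d x)"
    unfolding expand using sq ud d by simp
  have "(\<integral>x. (u x - m)\<^sup>2 * d x \<partial>M) = (\<integral>x. (u x)\<^sup>2 * d x \<partial>M) + m\<^sup>2 * (\<integral>x. d x \<partial>M)"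
    unfolding expand using sq ud d mean_zero by simp
  moreover have "0 \<le> (\<integral>x. d x \<partial>M)" using d by simp
  ultimately show "(\<integral>x. (u x)\<^sup>2 * d x \<partial>M) \<le> (\<integral>x. (u x - m)\<^sup>2 * d x \<partial>M)" by simp
qed

lemma eW_nonneg:
  assumes "graphon W" "A \<subseteq> unitI" "B \<subseteq> unitI"
  shows "0 \<le> eW W A B"
  unfolding eW_def
proof (rule Bochner_Integration.integral_nonneg)
  fix p assume "p \<in> space (lebesgue_on (A \<times> B))"
  then have "fst p \<in> unitI" "snd p \<in> unitI" using assms(2,3) by auto
  then show "0 \<le> W (fst p) (snd p)" using assms(1) unfolding graphon_def by blast
qed

lemma cheeger_ratio_nonneg:
  assumes "graphon W" "A \<subseteq> unitI"
  shows "0 \<le> eW W A (unitI - A) / min (volW W A) (volW W (unitI - A))"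
  using assms by (auto simp: volW_def intro!: divide_nonneg_nonneg eW_nonneg)

lemma cheeger_le:
  assumes "graphon W" "meas_subset A" "0 < measure lebesgue A" "measure lebesgue A < 1"
  shows "cheeger W \<le> eW W A (unitI - A) / min (volW W A) (volW W (unitI - A))"
  unfolding cheeger_def
proof (rule cInf_lower)
  show "bdd_below {eW W A (unitI - A) / min (volW W A) (volW W (unitI - A)) | A.
      meas_subset A \<and> 0 < measure lebesgue A \<and> measure lebesgue A < 1}"
    using cheeger_ratio_nonneg[OF assms(1)] by (intro bdd_belowI[of _ 0]) (auto simp: meas_subset_def)
qed (use assms in blast)

lemma cheeger_nonneg:
  assumes "graphon W"
  shows "0 \<le> cheeger W"
  unfolding cheeger_def
proof (rule cInf_greatest)
  have "meas_subset {0..1/2}" "measure lebesgue {0..1/2::real} = 1/2"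
    by (auto simp: meas_subset_def measure_completion)
  then show "{eW W A (unitI - A) / min (volW W A) (volW W (unitI - A)) | A.
      meas_subset A \<and> 0 < measure lebesgue A \<and> measure lebesgue A < 1} \<noteq> {}"
    by force
qed (use cheeger_ratio_nonneg[OF assms] in \<open>auto simp: meas_subset_def\<close>)

section \<open>Borel versions of graphons\<close>

locale graphon_borel_version =
  fixes W :: "real \<Rightarrow> real \<Rightarrow> real" and w :: "real \<times> real \<Rightarrow> real"
  assumes graphon: "graphon W"
    and w_measurable[measurable]: "w \<in> borel_measurable (lborel \<Otimes>\<^sub>M lborel)"
    and w_nonneg: "\<And>p. 0 \<le> w p" and w_le_1: "\<And>p. w p \<le> 1"
    and w_sym: "\<And>x y. w (x, y) = w (y, x)"
    and w_outside: "\<And>p. p \<notin> unitI \<times> unitI \<Longrightarrow> w p = 0"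
    and W_AE_eq_w: "AE p in lborel. p \<in> unitI \<times> unitI \<longrightarrow> W (fst p) (snd p) = w p"

lemma graphon_has_borel_version:
  assumes "graphon W"
  shows "\<exists>w. graphon_borel_version W w"
proof -
  let ?S = "unitI \<times> unitI"
  define g where "g p = indicator ?S p *\<^sub>R W (fst p) (snd p)" for p :: "real \<times> real"
  have "?S \<in> sets borel" by (intro borel_closed closed_Times closed_atLeastAtMost)
  then have "?S \<in> sets lebesgue" by (intro sets_completionI_sets) auto
  then have "g \<in> borel_measurable lebesgue"
    using assms unfolding graphon_def g_def
    by (subst (asm) borel_measurable_restrict_space_iff) auto
  then obtain w0 where w0: "w0 \<in> borel_measurable lborel" "AE p in lborel. g p = w0 p"
    using completion_ex_borel_measurable_real by blast
  define w1 where "w1 p = indicator ?S p * max 0 (min 1 (w0 p))" for p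
  have g_clamped: "g p = indicator ?S p * max 0 (min 1 (g p))" for p
    using assms unfolding graphon_def g_def by (auto simp: indicator_def)
  have g_eq_w1: "AE p in lborel. g p = w1 p"
    using w0(2) by eventually_elim (metis g_clamped w1_def)
  have "g (snd p, fst p) = g p" for p
    using assms unfolding graphon_def g_def by (cases p) (auto simp: indicator_def)
  then have g_eq_w1_swap: "AE p in lborel. g p = w1 (snd p, fst p)"
    using AE_lborel_pair_swap[OF g_eq_w1] by simp
  define w where "w p = (w1 p + w1 (snd p, fst p)) / 2" for p
  have [measurable]: "w0 \<in> borel_measurable (lborel \<Otimes>\<^sub>M lborel)" using w0 by (simp add: lborel_prod)
  have "graphon_borel_version W w"
  proof
    show "w \<in> borel_measurable (lborel \<Otimes>\<^sub>M lborel)"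
      unfolding w_def w1_def by measurable
    show "AE p in lborel. p \<in> ?S \<longrightarrow> W (fst p) (snd p) = w p"
      using g_eq_w1 g_eq_w1_swap by eventually_elim (auto simp: w_def g_def)
  qed (use assms in \<open>auto simp: w_def w1_def indicator_def graphon_def\<close>)
  then show ?thesis by blast
qed

context graphon_borel_version
begin

text \<open>In the notation of the paper, computed from \<open>w\<close>: \<open>deg\<close> is \<open>d\<^sub>W\<close>, \<open>edges\<close> is \<open>e\<^sub>W\<close>,
  \<open>vol\<close> is \<open>vol\<^sub>W\<close>, \<open>nu_norm2\<close> is \<open>\<parallel>_\<parallel>\<^sub>v\<^sup>2\<close> and \<open>energy_ordered\<close> is \<open>\<parallel>d_\<parallel>\<^sub>e\<^sup>2\<close>.\<close>


definition degn :: "real \<Rightarrow> ennreal" where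
  "degn x = (\<integral>\<^sup>+y. ennreal (w (x, y)) \<partial>lborel)"

definition deg :: "real \<Rightarrow> real" where
  "deg x = enn2real (degn x)"

definition edges :: "real set \<Rightarrow> real set \<Rightarrow> ennreal" where
  "edges S T = (\<integral>\<^sup>+x. \<integral>\<^sup>+y. ennreal (indicator S x * indicator T y * w (x, y)) \<partial>lborel \<partial>lborel)"

definition vol :: "real set \<Rightarrow> ennreal" where
  "vol S = (\<integral>\<^sup>+x. indicator S x * degn x \<partial>lborel)"

definition nu_norm2 :: "(real \<Rightarrow> real) \<Rightarrow> ennreal" where
  "nu_norm2 p = (\<integral>\<^sup>+x. ennreal ((p x)\<^sup>2) * degn x \<partial>lborel)"

definition energy :: "(real \<Rightarrow> real) \<Rightarrow> ennreal" where
  "energy p = (\<integral>\<^sup>+x. \<integral>\<^sup>+y. ennreal ((p y - p x)\<^sup>2 * w (x, y)) \<partial>lborel \<partial>lborel)"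

definition energy_ordered :: "(real \<Rightarrow> real) \<Rightarrow> ennreal" where
  "energy_ordered p =
     (\<integral>\<^sup>+x. \<integral>\<^sup>+y. ennreal (of_bool (x \<le> y) * ((p y - p x)\<^sup>2 * w (x, y))) \<partial>lborel \<partial>lborel)"

definition superlevel :: "(real \<Rightarrow> real) \<Rightarrow> real \<Rightarrow> real set" where
  "superlevel p t = {x \<in> unitI. t < (p x)\<^sup>2}"

definition expansion_bound :: "real \<Rightarrow> bool" where
  "expansion_bound h \<longleftrightarrow> (\<forall>S \<in> sets borel. S \<subseteq> unitI \<longrightarrow>
     ennreal h * min (vol S) (vol (unitI - S)) \<le> edges S (unitI - S))"

lemma degn_measurable[measurable]: "degn \<in> borel_measurable lborel"
  unfolding degn_def by measurable

lemma deg_measurable[measurable]: "deg \<in> borel_measurable lborel"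
  unfolding deg_def by measurable

lemma w_le_indicator: "w (x, y) \<le> indicator unitI y"
  using w_outside[of "(x, y)"] w_le_1[of "(x, y)"] by (cases "y \<in> unitI") auto

lemma degn_le_1: "degn x \<le> 1"
proof -
  have "degn x \<le> (\<integral>\<^sup>+y. indicator unitI y \<partial>lborel)"
    unfolding degn_def
    by (intro nn_integral_mono) (use ennreal_leI[OF w_le_indicator] in \<open>auto simp: ennreal_indicator\<close>)
  then show ?thesis by simp
qed

lemma degn_finite: "degn x < \<infinity>"
  using degn_le_1[of x] by (simp add: le_less_trans)

lemma degn_eq_deg: "degn x = ennreal (deg x)"
  using degn_finite[of x] unfolding deg_def by simp

lemma deg_nonneg: "0 \<le> deg x"
  unfolding deg_def by simp

lemma deg_le_1: "deg x \<le> 1"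
  using degn_le_1[of x] by (simp add: degn_eq_deg)

lemma degn_outside: "x \<notin> unitI \<Longrightarrow> degn x = 0"
  unfolding degn_def using w_outside[of "(x, _)"] by (subst nn_integral_cong[where v="\<lambda>_. 0"]) auto

lemma deg_outside: "x \<notin> unitI \<Longrightarrow> deg x = 0"
  unfolding deg_def by (simp add: degn_outside)

lemma integrable_deg: "integrable lborel deg"
proof (rule Bochner_Integration.integrable_bound)
  show "integrable lborel (indicator unitI :: real \<Rightarrow> real)" by simp
  show "AE x in lborel. norm (deg x) \<le> norm (indicator unitI x :: real)"
    using deg_nonneg deg_le_1 deg_outside by (auto simp: indicator_def)
qed simp

lemma AE_sections_W_eq_w:
  "AE x in lborel. x \<in> unitI \<longrightarrow> (AE y in lborel. y \<in> unitI \<longrightarrow> W x y = w (x, y))"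
proof -
  obtain N where N: "\<And>p. p \<notin> N \<Longrightarrow> p \<in> unitI \<times> unitI \<longrightarrow> W (fst p) (snd p) = w p"
    and N_null: "N \<in> null_sets (lborel \<Otimes>\<^sub>M lborel)"
    using AE_E3[OF W_AE_eq_w] by (auto simp: lborel_prod)
  have "AE x in lborel. AE y in lborel. (x, y) \<notin> N"
    using lborel_pair.AE_pair[OF AE_not_in[OF N_null]] by simp
  then show ?thesis
    by eventually_elim (auto elim!: eventually_mono dest: N[of "(_, _)"])
qed

lemma degW_AE_eq_deg: "AE x in lborel. x \<in> unitI \<longrightarrow> degW W x = deg x"
  using AE_sections_W_eq_w
proof eventually_elim
  case (elim x)
  show ?case
  proof
    assume x: "x \<in> unitI"
    have "degW W x = integral\<^sup>L lborel (\<lambda>y. w (x, y))"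
      unfolding degW_def
      by (rule lebesgue_on_eq_lborel_AE(1)) (use elim x w_outside in auto)
    also have "\<dots> = deg x"
      unfolding deg_def degn_def by (subst integral_eq_nn_integral) (auto simp: w_nonneg)
    finally show "degW W x = deg x" .
  qed
qed

lemma eW_eq_edges:
  assumes S: "S \<in> sets borel" "S \<subseteq> unitI" and T: "T \<in> sets borel" "T \<subseteq> unitI"
  shows "eW W S T = enn2real (edges S T)"
proof -
  have [measurable]: "S \<in> sets lborel" "T \<in> sets lborel" using S T by auto
  have "S \<times> T \<in> sets (lborel \<Otimes>\<^sub>M lborel)" by measurable
  then have ST: "S \<times> T \<in> sets borel" by (subst (asm) lborel_prod) simp
  have m: "(\<lambda>p. indicator (S \<times> T) p * w p) \<in> borel_measurable (lborel \<Otimes>\<^sub>M lborel)"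
    by measurable
  have "eW W S T = integral\<^sup>L lborel (\<lambda>p. indicator (S \<times> T) p * w p)"
    unfolding eW_def
  proof (rule lebesgue_on_eq_lborel_AE(1)[OF ST])
    show "(\<lambda>p. indicator (S \<times> T) p * w p) \<in> borel_measurable borel"
      using m by (simp add: lborel_prod)
    show "AE p in lborel. p \<in> S \<times> T \<longrightarrow> W (fst p) (snd p) = indicator (S \<times> T) p * w p"
      using W_AE_eq_w by eventually_elim (use S T in auto)
  qed simp
  also have "\<dots> = enn2real (\<integral>\<^sup>+p. ennreal (indicator (S \<times> T) p * w p) \<partial>(lborel \<Otimes>\<^sub>M lborel))"
    using m by (subst integral_eq_nn_integral) (auto simp: w_nonneg lborel_prod)
  also have "(\<integral>\<^sup>+p. ennreal (indicator (S \<times> T) p * w p) \<partial>(lborel \<Otimes>\<^sub>M lborel)) = edges S T"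
    unfolding edges_def
    by (subst lborel.nn_integral_fst[symmetric]) (auto simp: indicator_times intro!: nn_integral_cong)
  finally show ?thesis .
qed

lemma edges_unitI: "edges S unitI = vol S"
  unfolding edges_def vol_def degn_def
proof (intro nn_integral_cong)
  fix x
  have "(\<integral>\<^sup>+y. ennreal (indicator S x * indicator unitI y * w (x, y)) \<partial>lborel)
      = (\<integral>\<^sup>+y. indicator S x * ennreal (w (x, y)) \<partial>lborel)"
    by (intro nn_integral_cong) (use w_outside[of "(x, _)"] in \<open>auto simp: indicator_def\<close>)
  also have "\<dots> = indicator S x * (\<integral>\<^sup>+y. ennreal (w (x, y)) \<partial>lborel)"
    by (rule nn_integral_cmult) measurable
  finally show "(\<integral>\<^sup>+y. ennreal (indicator S x * indicator unitI y * w (x, y)) \<partial>lborel)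
      = indicator S x * (\<integral>\<^sup>+y. ennreal (w (x, y)) \<partial>lborel)" .
qed

lemma volW_eq_vol:
  assumes "S \<in> sets borel" "S \<subseteq> unitI"
  shows "volW W S = enn2real (vol S)"
  unfolding volW_def using eW_eq_edges[OF assms, of unitI] by (simp add: edges_unitI)

lemma edges_swap:
  assumes [measurable]: "S \<in> sets borel" "T \<in> sets borel"
  shows "edges S T = edges T S"
proof -
  have "edges S T = (\<integral>\<^sup>+x. \<integral>\<^sup>+y. ennreal (indicator S y * indicator T x * w (y, x)) \<partial>lborel \<partial>lborel)"
    unfolding edges_def by (rule lborel_pair.Fubini') measurable
  then show ?thesis unfolding edges_def by (simp add: w_sym mult.commute)
qed

lemma edges_le_vol:
  assumes "T \<subseteq> unitI"
  shows "edges S T \<le> vol S"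
proof -
  have "edges S T \<le> edges S unitI"
    unfolding edges_def using assms
    by (intro nn_integral_mono ennreal_leI mult_right_mono) (auto simp: indicator_def w_nonneg)
  then show ?thesis by (simp add: edges_unitI)
qed

lemma vol_mono: "S \<subseteq> T \<Longrightarrow> vol S \<le> vol T"
  unfolding vol_def by (intro nn_integral_mono) (auto simp: indicator_def)

lemma vol_outside: "vol (S - unitI) = 0"
proof -
  have "indicator (S - unitI) x * degn x = 0" for x
    by (cases "x \<in> unitI") (auto simp: degn_outside)
  then show ?thesis unfolding vol_def by (simp del: mult_eq_0_iff)
qed

lemma vol_le_1: "vol S \<le> 1"
proof -
  have "vol S \<le> (\<integral>\<^sup>+x. indicator unitI x \<partial>lborel)"
    unfolding vol_def
    by (intro nn_integral_mono) (use degn_le_1 degn_outside in \<open>auto simp: indicator_def\<close>)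
  then show ?thesis by simp
qed

lemma vol_finite: "vol S < \<infinity>"
  using vol_le_1[of S] by (simp add: le_less_trans)

lemma vol_add_compl:
  assumes "S \<in> sets borel"
  shows "vol S + vol (unitI - S) = vol unitI"
proof -
  have [measurable]: "S \<in> sets lborel" using assms by simp
  have "vol S + vol (unitI - S) = (\<integral>\<^sup>+x. indicator S x * degn x + indicator (unitI - S) x * degn x \<partial>lborel)"
    unfolding vol_def by (simp add: nn_integral_add)
  also have "\<dots> = (\<integral>\<^sup>+x. indicator unitI x * degn x + indicator (S - unitI) x * degn x \<partial>lborel)"
    by (intro nn_integral_cong) (auto simp: indicator_def)
  also have "\<dots> = vol unitI + vol (S - unitI)"
    unfolding vol_def by (simp add: nn_integral_add)
  finally show ?thesis by (simp add: vol_outside)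
qed

lemma vol_UNIV: "vol UNIV = vol unitI"
  using vol_outside[of UNIV] vol_add_compl[of UNIV] by (simp add: vol_def)

lemma vol_le_compl:
  assumes "S \<in> sets borel" "2 * vol S \<le> vol unitI"
  shows "vol S \<le> vol (unitI - S)"
proof -
  have "vol S + vol S \<le> vol S + vol (unitI - S)"
    using assms vol_add_compl[OF assms(1)] by (simp add: mult_2)
  then show ?thesis using vol_finite[of S] by (auto simp: ennreal_add_left_cancel_le)
qed

lemma vol_null:
  assumes S: "S \<in> sets borel" "S \<subseteq> unitI" and null: "measure lborel S = 0"
  shows "vol S = 0"
proof -
  have "emeasure lborel S \<le> emeasure lborel unitI" using S by (intro emeasure_mono) auto
  then have "emeasure lborel S < \<infinity>" by (simp add: le_less_trans)
  then have "emeasure lborel S = 0"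
    using null emeasure_eq_ennreal_measure[of lborel S] by (simp add: less_top)
  moreover have "vol S \<le> (\<integral>\<^sup>+x. indicator S x \<partial>lborel)"
    unfolding vol_def by (intro nn_integral_mono) (use degn_le_1 in \<open>auto simp: indicator_def\<close>)
  ultimately show ?thesis using S by simp
qed

lemma expansion_boundD:
  assumes "expansion_bound h" "S \<in> sets borel" "S \<subseteq> unitI" "vol S \<le> vol (unitI - S)"
  shows "ennreal h * vol S \<le> edges S (unitI - S)" "ennreal h * vol S \<le> edges (unitI - S) S"
proof -
  have compl: "unitI - (unitI - S) = S" "unitI - S \<in> sets borel" using assms(2,3) by auto
  have "ennreal h * min (vol S) (vol (unitI - S)) \<le> edges S (unitI - S)"
    using assms(1-3) unfolding expansion_bound_def by blast
  moreover have "ennreal h * min (vol (unitI - S)) (vol S) \<le> edges (unitI - S) S"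
    using assms(1) compl unfolding expansion_bound_def
    by (metis Diff_subset)
  ultimately show "ennreal h * vol S \<le> edges S (unitI - S)" "ennreal h * vol S \<le> edges (unitI - S) S"
    using assms(4) by (simp_all add: min_absorb1 min_absorb2)
qed

lemma nn_integral_sq_fst_w:
  assumes [measurable]: "p \<in> borel_measurable lborel"
  shows "(\<integral>\<^sup>+x. \<integral>\<^sup>+y. ennreal ((p x)\<^sup>2 * w (x, y)) \<partial>lborel \<partial>lborel) = nu_norm2 p"
  unfolding nu_norm2_def degn_def
  by (intro nn_integral_cong) (simp add: ennreal_mult' nn_integral_cmult)

lemma nn_integral_sq_snd_w:
  assumes [measurable]: "p \<in> borel_measurable lborel"
  shows "(\<integral>\<^sup>+x. \<integral>\<^sup>+y. ennreal ((p y)\<^sup>2 * w (x, y)) \<partial>lborel \<partial>lborel) = nu_norm2 p"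
proof -
  have "(\<integral>\<^sup>+x. \<integral>\<^sup>+y. ennreal ((p y)\<^sup>2 * w (x, y)) \<partial>lborel \<partial>lborel)
      = (\<integral>\<^sup>+x. \<integral>\<^sup>+y. ennreal ((p x)\<^sup>2 * w (y, x)) \<partial>lborel \<partial>lborel)"
    by (rule lborel_pair.Fubini') measurable
  then show ?thesis by (simp add: w_sym nn_integral_sq_fst_w)
qed

lemma energy_le_nu_norm2:
  assumes [measurable]: "p \<in> borel_measurable lborel"
  shows "energy p \<le> 4 * nu_norm2 p"
proof -
  have "energy p \<le> (\<integral>\<^sup>+x. \<integral>\<^sup>+y. 2 * ennreal ((p x)\<^sup>2 * w (x, y)) + 2 * ennreal ((p y)\<^sup>2 * w (x, y)) \<partial>lborel \<partial>lborel)"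
    unfolding energy_def
  proof (intro nn_integral_mono)
    fix x y
    have "(p y - p x)\<^sup>2 * w (x, y) \<le> 2 * ((p x)\<^sup>2 * w (x, y)) + 2 * ((p y)\<^sup>2 * w (x, y))"
      using mult_right_mono[OF diff_sq_le_sum_sq[of "p y" "p x"] w_nonneg[of "(x, y)"]]
      by (simp add: algebra_simps)
    moreover have "2 * ennreal ((p x)\<^sup>2 * w (x, y)) + 2 * ennreal ((p y)\<^sup>2 * w (x, y))
        = ennreal (2 * ((p x)\<^sup>2 * w (x, y)) + 2 * ((p y)\<^sup>2 * w (x, y)))"
      using w_nonneg[of "(x, y)"] by (subst ennreal_plus) (auto simp: ennreal_mult)
    ultimately show "ennreal ((p y - p x)\<^sup>2 * w (x, y))
        \<le> 2 * ennreal ((p x)\<^sup>2 * w (x, y)) + 2 * ennreal ((p y)\<^sup>2 * w (x, y))"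
      by (simp add: ennreal_leI)
  qed
  also have "\<dots> = 2 * nu_norm2 p + 2 * nu_norm2 p"
    by (simp add: nn_integral_add nn_integral_cmult nn_integral_sq_fst_w nn_integral_sq_snd_w)
  finally show ?thesis by (simp add: ring_distribs(2)[symmetric] mult.assoc[symmetric])
qed

lemma energy_ordered_le_energy: "energy_ordered p \<le> energy p"
  unfolding energy_ordered_def energy_def
  by (intro nn_integral_mono ennreal_leI) (auto simp: w_nonneg)

lemma energy_le_energy_ordered:
  assumes [measurable]: "p \<in> borel_measurable lborel"
  shows "energy p \<le> 2 * energy_ordered p"
proof -
  define F where "F x y = ennreal ((p y - p x)\<^sup>2 * w (x, y))" for x y
  have [measurable]: "case_prod F \<in> borel_measurable (lborel \<Otimes>\<^sub>M lborel)"
    unfolding F_def by measurable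
  have F_sym: "F x y = F y x" for x y
    unfolding F_def by (simp add: w_sym power2_commute)
  have ordered: "energy_ordered p = (\<integral>\<^sup>+x. \<integral>\<^sup>+y. of_bool (x \<le> y) * F x y \<partial>lborel \<partial>lborel)"
    unfolding energy_ordered_def F_def by (intro nn_integral_cong) simp
  have "energy p = (\<integral>\<^sup>+x. \<integral>\<^sup>+y. of_bool (x \<le> y) * F x y + of_bool (y < x) * F x y \<partial>lborel \<partial>lborel)"
    unfolding energy_def F_def by (intro nn_integral_cong) simp
  also have "\<dots> = energy_ordered p + (\<integral>\<^sup>+x. \<integral>\<^sup>+y. of_bool (y < x) * F x y \<partial>lborel \<partial>lborel)"
    unfolding ordered by (simp add: nn_integral_add)
  also have "(\<integral>\<^sup>+x. \<integral>\<^sup>+y. of_bool (y < x) * F x y \<partial>lborel \<partial>lborel)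
        = (\<integral>\<^sup>+x. \<integral>\<^sup>+y. of_bool (x < y) * F y x \<partial>lborel \<partial>lborel)"
    by (rule lborel_pair.Fubini') measurable
  also have "\<dots> \<le> energy_ordered p"
    unfolding ordered by (intro nn_integral_mono) (auto simp: F_sym)
  finally show ?thesis by (simp add: mult_2 add_left_mono)
qed

lemma superlevel_borel[measurable]:
  assumes [measurable]: "p \<in> borel_measurable lborel"
  shows "superlevel p t \<in> sets borel"
proof -
  have "{x \<in> space lborel. x \<in> unitI \<and> t < (p x)\<^sup>2} \<in> sets lborel" by measurable
  then show ?thesis unfolding superlevel_def by simp
qed

section \<open>The coarea argument\<close>

lemma nn_integral_between: "(\<integral>\<^sup>+t. of_bool (min a b \<le> t \<and> t < max a b) \<partial>lborel) = ennreal \<bar>a - b\<bar>"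
proof -
  have "(\<integral>\<^sup>+t. of_bool (min a b \<le> t \<and> t < max a b) \<partial>lborel)
      = (\<integral>\<^sup>+t. indicator {min a b..<max a b} t \<partial>lborel)"
    by (intro nn_integral_cong) (auto simp: indicator_def)
  then show ?thesis by (cases "a \<le> b") auto
qed

lemma nn_integral_abs_diff_sq_superlevel:
  assumes [measurable]: "p \<in> borel_measurable lborel"
  shows "(\<integral>\<^sup>+x. \<integral>\<^sup>+y. ennreal (\<bar>(p x)\<^sup>2 - (p y)\<^sup>2\<bar> * w (x, y)) \<partial>lborel \<partial>lborel)
    = (\<integral>\<^sup>+t. edges (superlevel p t) (unitI - superlevel p t)
             + edges (unitI - superlevel p t) (superlevel p t) \<partial>lborel)"
proof -
  define F where "F x y t = ennreal (w (x, y)) *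
      of_bool (min ((p x)\<^sup>2) ((p y)\<^sup>2) \<le> t \<and> t < max ((p x)\<^sup>2) ((p y)\<^sup>2))" for x y t
  have "(\<integral>\<^sup>+x. \<integral>\<^sup>+y. ennreal (\<bar>(p x)\<^sup>2 - (p y)\<^sup>2\<bar> * w (x, y)) \<partial>lborel \<partial>lborel)
      = (\<integral>\<^sup>+x. \<integral>\<^sup>+y. \<integral>\<^sup>+t. F x y t \<partial>lborel \<partial>lborel \<partial>lborel)"
    unfolding F_def using w_nonneg
    by (intro nn_integral_cong) (simp add: nn_integral_cmult nn_integral_between ennreal_mult' mult.commute)
  also have "\<dots> = (\<integral>\<^sup>+x. \<integral>\<^sup>+t. \<integral>\<^sup>+y. F x y t \<partial>lborel \<partial>lborel \<partial>lborel)"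
    by (intro nn_integral_cong lborel_pair.Fubini'[symmetric]) (unfold F_def, measurable)
  also have "\<dots> = (\<integral>\<^sup>+t. \<integral>\<^sup>+x. \<integral>\<^sup>+y. F x y t \<partial>lborel \<partial>lborel \<partial>lborel)"
    by (rule lborel_pair.Fubini'[symmetric]) (unfold F_def, measurable)
  also have "\<dots> = (\<integral>\<^sup>+t. edges (superlevel p t) (unitI - superlevel p t)
             + edges (unitI - superlevel p t) (superlevel p t) \<partial>lborel)"
  proof (intro nn_integral_cong)
    fix t
    have [measurable]: "superlevel p t \<in> sets lborel" by simp
    text \<open>\<open>t\<close> lies between \<open>(p x)\<^sup>2\<close> and \<open>(p y)\<^sup>2\<close> iff the edge \<open>(x, y)\<close> crosses the cut at level \<open>t\<close>.\<close>
    have "F x y t = ennreal (indicator (superlevel p t) x * indicator (unitI - superlevel p t) y * w (x, y))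
        + ennreal (indicator (unitI - superlevel p t) x * indicator (superlevel p t) y * w (x, y))" for x y
    proof (cases "x \<in> unitI \<and> y \<in> unitI")
      case True
      then show ?thesis unfolding F_def superlevel_def by (auto simp: indicator_def not_less)
    next
      case False
      then show ?thesis using w_outside[of "(x, y)"] by (auto simp: F_def)
    qed
    then show "(\<integral>\<^sup>+x. \<integral>\<^sup>+y. F x y t \<partial>lborel \<partial>lborel) = edges (superlevel p t) (unitI - superlevel p t)
             + edges (unitI - superlevel p t) (superlevel p t)"
      unfolding edges_def by (simp add: nn_integral_add)
  qed
  finally show ?thesis .
qed

lemma nn_integral_vol_superlevel:
  assumes [measurable]: "p \<in> borel_measurable lborel"
  shows "(\<integral>\<^sup>+t. indicator {0..} t * vol (superlevel p t) \<partial>lborel) = nu_norm2 p"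
proof -
  have "(\<integral>\<^sup>+t. indicator {0..} t * vol (superlevel p t) \<partial>lborel)
     = (\<integral>\<^sup>+t. \<integral>\<^sup>+x. of_bool (0 \<le> t \<and> x \<in> unitI \<and> t < (p x)\<^sup>2) * degn x \<partial>lborel \<partial>lborel)"
    unfolding vol_def
    by (intro nn_integral_cong)
       (auto simp: nn_integral_cmult[symmetric] superlevel_def indicator_def intro!: nn_integral_cong)
  also have "\<dots> = (\<integral>\<^sup>+x. \<integral>\<^sup>+t. of_bool (0 \<le> t \<and> x \<in> unitI \<and> t < (p x)\<^sup>2) * degn x \<partial>lborel \<partial>lborel)"
    by (rule lborel_pair.Fubini') measurable
  also have "\<dots> = (\<integral>\<^sup>+x. degn x * ennreal ((p x)\<^sup>2) \<partial>lborel)"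
  proof (intro nn_integral_cong)
    fix x
    have "(\<integral>\<^sup>+t. of_bool (0 \<le> t \<and> x \<in> unitI \<and> t < (p x)\<^sup>2) * degn x \<partial>lborel)
        = (\<integral>\<^sup>+t. degn x * indicator {0..<(p x)\<^sup>2} t \<partial>lborel)"
      by (intro nn_integral_cong) (auto simp: indicator_def degn_outside)
    then show "(\<integral>\<^sup>+t. of_bool (0 \<le> t \<and> x \<in> unitI \<and> t < (p x)\<^sup>2) * degn x \<partial>lborel)
        = degn x * ennreal ((p x)\<^sup>2)"
      by (simp add: nn_integral_cmult_indicator)
  qed
  finally show ?thesis unfolding nu_norm2_def by (simp add: mult.commute)
qed

lemma expansion_bound_coarea:
  assumes [measurable]: "p \<in> borel_measurable lborel"
    and h: "expansion_bound h"
    and small: "\<And>t. 0 \<le> t \<Longrightarrow> vol (superlevel p t) \<le> vol (unitI - superlevel p t)"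
  shows "2 * ennreal h * nu_norm2 p
    \<le> (\<integral>\<^sup>+x. \<integral>\<^sup>+y. ennreal (\<bar>(p x)\<^sup>2 - (p y)\<^sup>2\<bar> * w (x, y)) \<partial>lborel \<partial>lborel)"
proof -
  have [measurable]: "(\<lambda>t. vol (superlevel p t)) \<in> borel_measurable lborel"
  proof -
    have "vol (superlevel p t) = (\<integral>\<^sup>+x. of_bool (x \<in> unitI \<and> t < (p x)\<^sup>2) * degn x \<partial>lborel)" for t
      unfolding vol_def superlevel_def by (intro nn_integral_cong) (auto simp: indicator_def)
    moreover have "(\<lambda>t. \<integral>\<^sup>+x. of_bool (x \<in> unitI \<and> t < (p x)\<^sup>2) * degn x \<partial>lborel) \<in> borel_measurable lborel"
      by measurable
    ultimately show ?thesis by simp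
  qed
  have "2 * ennreal h * nu_norm2 p = (\<integral>\<^sup>+t. indicator {0..} t * (2 * ennreal h * vol (superlevel p t)) \<partial>lborel)"
    by (simp add: nn_integral_vol_superlevel[symmetric] nn_integral_cmult[symmetric] ac_simps)
  also have "\<dots> \<le> (\<integral>\<^sup>+t. edges (superlevel p t) (unitI - superlevel p t)
                     + edges (unitI - superlevel p t) (superlevel p t) \<partial>lborel)"
  proof (intro nn_integral_mono)
    fix t
    show "indicator {0..} t * (2 * ennreal h * vol (superlevel p t))
        \<le> edges (superlevel p t) (unitI - superlevel p t) + edges (unitI - superlevel p t) (superlevel p t)"
    proof (cases "0 \<le> t")
      case True
      have "superlevel p t \<subseteq> unitI" by (auto simp: superlevel_def)
      from add_mono[OF expansion_boundD[OF h _ this small[OF True]]] True show ?thesis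
        by (simp add: mult_2 distrib_right)
    qed simp
  qed
  also have "\<dots> = (\<integral>\<^sup>+x. \<integral>\<^sup>+y. ennreal (\<bar>(p x)\<^sup>2 - (p y)\<^sup>2\<bar> * w (x, y)) \<partial>lborel \<partial>lborel)"
    by (rule nn_integral_abs_diff_sq_superlevel[symmetric]) simp
  finally show ?thesis .
qed

lemma coarea_le_energy:
  assumes [measurable]: "p \<in> borel_measurable lborel" and h: "0 \<le> h"
  shows "ennreal h * (\<integral>\<^sup>+x. \<integral>\<^sup>+y. ennreal (\<bar>(p x)\<^sup>2 - (p y)\<^sup>2\<bar> * w (x, y)) \<partial>lborel \<partial>lborel)
     \<le> energy p + ennreal (h\<^sup>2) * nu_norm2 p"
proof -
  have "ennreal h * (\<integral>\<^sup>+x. \<integral>\<^sup>+y. ennreal (\<bar>(p x)\<^sup>2 - (p y)\<^sup>2\<bar> * w (x, y)) \<partial>lborel \<partial>lborel)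
     = (\<integral>\<^sup>+x. \<integral>\<^sup>+y. ennreal (h * \<bar>(p x)\<^sup>2 - (p y)\<^sup>2\<bar> * w (x, y)) \<partial>lborel \<partial>lborel)"
    using h by (simp add: nn_integral_cmult[symmetric] ennreal_mult' mult.assoc)
  also have "\<dots> \<le> (\<integral>\<^sup>+x. \<integral>\<^sup>+y. ennreal ((p y - p x)\<^sup>2 * w (x, y))
        + ennreal (h\<^sup>2 / 2) * ennreal ((p x)\<^sup>2 * w (x, y))
        + ennreal (h\<^sup>2 / 2) * ennreal ((p y)\<^sup>2 * w (x, y)) \<partial>lborel \<partial>lborel)"
  proof (intro nn_integral_mono)
    fix x y
    have "h * \<bar>(p x)\<^sup>2 - (p y)\<^sup>2\<bar> * w (x, y)
        \<le> ((p x - p y)\<^sup>2 + h\<^sup>2 / 2 * ((p x)\<^sup>2 + (p y)\<^sup>2)) * w (x, y)"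
      by (rule mult_right_mono[OF abs_diff_squares_le[OF h] w_nonneg])
    also have "\<dots> = (p y - p x)\<^sup>2 * w (x, y) + h\<^sup>2 / 2 * ((p x)\<^sup>2 * w (x, y)) + h\<^sup>2 / 2 * ((p y)\<^sup>2 * w (x, y))"
      by (simp add: power2_commute algebra_simps)
    finally show "ennreal (h * \<bar>(p x)\<^sup>2 - (p y)\<^sup>2\<bar> * w (x, y))
        \<le> ennreal ((p y - p x)\<^sup>2 * w (x, y)) + ennreal (h\<^sup>2 / 2) * ennreal ((p x)\<^sup>2 * w (x, y))
          + ennreal (h\<^sup>2 / 2) * ennreal ((p y)\<^sup>2 * w (x, y))"
      using w_nonneg[of "(x, y)"]
      by (simp add: ennreal_leI ennreal_mult[symmetric] ennreal_plus[symmetric] del: ennreal_plus)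
  qed
  also have "\<dots> = energy p + ennreal (h\<^sup>2 / 2) * nu_norm2 p + ennreal (h\<^sup>2 / 2) * nu_norm2 p"
    by (simp add: nn_integral_add nn_integral_cmult nn_integral_sq_fst_w nn_integral_sq_snd_w energy_def)
  also have "\<dots> = energy p + ennreal (h\<^sup>2) * nu_norm2 p"
    by (simp add: add.assoc distrib_right[symmetric] ennreal_plus[symmetric] del: ennreal_plus)
  finally show ?thesis .
qed

lemma expansion_bound_energy:
  assumes [measurable]: "p \<in> borel_measurable lborel"
    and "0 \<le> h" "expansion_bound h"
    and "\<And>t. 0 \<le> t \<Longrightarrow> vol (superlevel p t) \<le> vol (unitI - superlevel p t)"
    and finite: "nu_norm2 p < \<infinity>"
  shows "ennreal (h\<^sup>2) * nu_norm2 p \<le> energy p"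
proof -
  have "ennreal (h\<^sup>2) * nu_norm2 p + ennreal (h\<^sup>2) * nu_norm2 p = ennreal h * (2 * ennreal h * nu_norm2 p)"
    using \<open>0 \<le> h\<close> by (simp add: power2_eq_square ennreal_mult mult_2 distrib_left distrib_right ac_simps)
  also have "\<dots> \<le> ennreal h * (\<integral>\<^sup>+x. \<integral>\<^sup>+y. ennreal (\<bar>(p x)\<^sup>2 - (p y)\<^sup>2\<bar> * w (x, y)) \<partial>lborel \<partial>lborel)"
    using assms by (intro mult_left_mono expansion_bound_coarea) auto
  also have "\<dots> \<le> ennreal (h\<^sup>2) * nu_norm2 p + energy p"
    using coarea_le_energy[OF assms(1,2)] by (simp add: add.commute)
  finally show ?thesis
    using finite by (auto simp: ennreal_add_left_cancel_le ennreal_mult_eq_top_iff)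
qed

lemma energy_pos_part_add_neg_part_le:
  assumes [measurable]: "g \<in> borel_measurable lborel"
  shows "energy (\<lambda>x. max (g x) 0) + energy (\<lambda>x. max (- g x) 0) \<le> energy g"
proof -
  have "energy (\<lambda>x. max (g x) 0) + energy (\<lambda>x. max (- g x) 0) =
    (\<integral>\<^sup>+x. \<integral>\<^sup>+y. ennreal ((max (g y) 0 - max (g x) 0)\<^sup>2 * w (x, y))
      + ennreal ((max (- g y) 0 - max (- g x) 0)\<^sup>2 * w (x, y)) \<partial>lborel \<partial>lborel)"
    unfolding energy_def by (simp add: nn_integral_add)
  also have "\<dots> \<le> energy g"
    unfolding energy_def
  proof (intro nn_integral_mono)
    fix x y
    have "((max (g y) 0 - max (g x) 0)\<^sup>2 + (max (- g y) 0 - max (- g x) 0)\<^sup>2) * w (x, y)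
        \<le> (g y - g x)\<^sup>2 * w (x, y)"
      by (rule mult_right_mono[OF pos_neg_part_diff_sq_le w_nonneg])
    then show "ennreal ((max (g y) 0 - max (g x) 0)\<^sup>2 * w (x, y))
        + ennreal ((max (- g y) 0 - max (- g x) 0)\<^sup>2 * w (x, y)) \<le> ennreal ((g y - g x)\<^sup>2 * w (x, y))"
      using w_nonneg[of "(x, y)"]
      by (simp add: ennreal_plus[symmetric] distrib_right ennreal_leI del: ennreal_plus)
  qed
  finally show ?thesis .
qed

lemma nu_norm2_pos_part_add_neg_part:
  assumes [measurable]: "g \<in> borel_measurable lborel"
  shows "nu_norm2 (\<lambda>x. max (g x) 0) + nu_norm2 (\<lambda>x. max (- g x) 0) = nu_norm2 g"
proof -
  have "ennreal ((max (g x) 0)\<^sup>2) + ennreal ((max (- g x) 0)\<^sup>2) = ennreal ((g x)\<^sup>2)" for x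
    by (cases "0 \<le> g x") auto
  then show ?thesis
    unfolding nu_norm2_def by (simp add: nn_integral_add[symmetric] distrib_right[symmetric])
qed

lemma energy_pos_part_bound:
  assumes [measurable]: "g \<in> borel_measurable lborel"
    and "0 \<le> h" "expansion_bound h"
    and half: "2 * vol {x. 0 < g x} \<le> vol unitI"
    and finite: "nu_norm2 g < \<infinity>"
  shows "ennreal (h\<^sup>2) * nu_norm2 (\<lambda>x. max (g x) 0) \<le> energy (\<lambda>x. max (g x) 0)"
proof (rule expansion_bound_energy[OF _ assms(2,3)])
  show "vol (superlevel (\<lambda>x. max (g x) 0) t) \<le> vol (unitI - superlevel (\<lambda>x. max (g x) 0) t)"
    if "0 \<le> t" for t
  proof (rule vol_le_compl)
    have "superlevel (\<lambda>x. max (g x) 0) t \<subseteq> {x. 0 < g x}"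
      using that by (auto simp: superlevel_def max_def split: if_splits)
    then show "2 * vol (superlevel (\<lambda>x. max (g x) 0) t) \<le> vol unitI"
      using half by (meson mult_left_mono vol_mono order_trans zero_le)
  qed simp
  have "nu_norm2 (\<lambda>x. max (g x) 0) \<le> nu_norm2 g"
    using nu_norm2_pos_part_add_neg_part[OF assms(1)] by (metis le_iff_add)
  then show "nu_norm2 (\<lambda>x. max (g x) 0) < \<infinity>"
    using finite by (rule le_less_trans)
qed simp

lemma vol_median:
  fixes u :: "real \<Rightarrow> real"
  assumes [measurable]: "u \<in> borel_measurable lborel"
  obtains m where "2 * vol {x. m < u x} \<le> vol unitI" "2 * vol {x. u x < m} \<le> vol unitI"
proof -
  define M where "M = distr (density lborel degn) borel u"
  have emeasure_M: "emeasure M B = vol (u -` B)" if [measurable]: "B \<in> sets borel" for B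
  proof -
    have "u -` B \<in> sets borel"
      using measurable_sets[OF assms that] by simp
    show ?thesis unfolding M_def
      using \<open>u -` B \<in> sets borel\<close>
      by (subst emeasure_distr, simp_all) (subst emeasure_density, auto simp: vol_def mult.commute)
  qed
  have "emeasure M (space M) \<noteq> \<infinity>"
    using emeasure_M[of UNIV] vol_finite[of UNIV] by (simp add: M_def)
  then interpret finite_measure M by (rule finite_measureI)
  interpret finite_borel_measure M by unfold_locales (simp add: M_def)
  have vol_eq: "vol (u -` B) = ennreal (measure M B)" if "B \<in> sets borel" for B
    using emeasure_M[OF that] emeasure_eq_measure[of B] by simp
  obtain m where m: "2 * measure M {m<..} \<le> measure M UNIV" "2 * measure M {..<m} \<le> measure M UNIV"
    using median_exists by (auto simp: borel_UNIV)
  have "vol unitI = ennreal (measure M UNIV)"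
    using vol_eq[of UNIV] by (simp add: vol_UNIV)
  moreover have "2 * vol {x. m < u x} = ennreal (2 * measure M {m<..})"
    "2 * vol {x. u x < m} = ennreal (2 * measure M {..<m})"
    using vol_eq[of "{m<..}"] vol_eq[of "{..<m}"] by (simp_all add: vimage_def ennreal_mult)
  ultimately show thesis
    using m by (intro that[of m]) (simp_all add: ennreal_leI)
qed

lemma nu_norm2_eq_integral:
  assumes "integrable lborel (\<lambda>x. (u x)\<^sup>2 * deg x)"
  shows "nu_norm2 u = ennreal (\<integral>x. (u x)\<^sup>2 * deg x \<partial>lborel)"
proof -
  have "nu_norm2 u = (\<integral>\<^sup>+x. ennreal ((u x)\<^sup>2 * deg x) \<partial>lborel)"
    unfolding nu_norm2_def by (intro nn_integral_cong) (simp add: degn_eq_deg ennreal_mult deg_nonneg)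
  also have "\<dots> = ennreal (\<integral>x. (u x)\<^sup>2 * deg x \<partial>lborel)"
    by (rule nn_integral_eq_integral[OF assms]) (simp add: deg_nonneg)
  finally show ?thesis .
qed

lemma energy_bound_mean_zero:
  assumes [measurable]: "u \<in> borel_measurable lborel"
    and "0 \<le> h" "expansion_bound h"
    and sq: "integrable lborel (\<lambda>x. (u x)\<^sup>2 * deg x)"
    and mean_zero: "(\<integral>x. u x * deg x \<partial>lborel) = 0"
  shows "ennreal (h\<^sup>2 * (\<integral>x. (u x)\<^sup>2 * deg x \<partial>lborel)) \<le> energy u"
proof -
  obtain m where m: "2 * vol {x. m < u x} \<le> vol unitI" "2 * vol {x. u x < m} \<le> vol unitI"
    using vol_median[OF assms(1)] by blast
  define g where "g x = u x - m" for x
  have [measurable]: "g \<in> borel_measurable lborel" unfolding g_def by simp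
  note shift = integral_sq_weight_le_shift[OF _ deg_measurable sq integrable_deg deg_nonneg mean_zero, of m]
  have nu_g: "nu_norm2 g = ennreal (\<integral>x. (g x)\<^sup>2 * deg x \<partial>lborel)"
    unfolding g_def by (rule nu_norm2_eq_integral[OF shift(1)]) simp
  have finite: "nu_norm2 g < \<infinity>" "nu_norm2 (\<lambda>x. - g x) < \<infinity>"
    using nu_g by (simp_all add: nu_norm2_def)
  have "2 * vol {x. 0 < g x} \<le> vol unitI" "2 * vol {x. 0 < - g x} \<le> vol unitI"
    using m by (simp_all add: g_def)
  then have pos: "ennreal (h\<^sup>2) * nu_norm2 (\<lambda>x. max (g x) 0) \<le> energy (\<lambda>x. max (g x) 0)"
    and neg: "ennreal (h\<^sup>2) * nu_norm2 (\<lambda>x. max (- g x) 0) \<le> energy (\<lambda>x. max (- g x) 0)"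
    using energy_pos_part_bound[OF _ assms(2,3)] finite by simp_all
  have "ennreal (h\<^sup>2 * (\<integral>x. (u x)\<^sup>2 * deg x \<partial>lborel)) \<le> ennreal (h\<^sup>2) * nu_norm2 g"
    unfolding nu_g using shift(2)
    by (simp add: g_def ennreal_mult'[symmetric] ennreal_leI mult_left_mono)
  also have "\<dots> = ennreal (h\<^sup>2) * nu_norm2 (\<lambda>x. max (g x) 0) + ennreal (h\<^sup>2) * nu_norm2 (\<lambda>x. max (- g x) 0)"
    by (simp add: nu_norm2_pos_part_add_neg_part distrib_left[symmetric])
  also have "\<dots> \<le> energy g"
    using add_mono[OF pos neg] energy_pos_part_add_neg_part_le[of g] by simp
  also have "energy g = energy u"
    unfolding energy_def g_def by simp
  finally show ?thesis .
qed

section \<open>Rayleigh quotients and the Cheeger constant\<close>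

lemma min_vol_eq_volW:
  assumes "S \<in> sets borel" "S \<subseteq> unitI"
  shows "min (vol S) (vol (unitI - S)) = ennreal (min (volW W S) (volW W (unitI - S)))"
proof -
  have vol_eq: "vol T = ennreal (volW W T)" if "T \<in> sets borel" "T \<subseteq> unitI" for T
    using volW_eq_vol[OF that] vol_finite[of T] by (simp add: less_top)
  have "unitI - S \<in> sets borel" using assms(1) by auto
  then show ?thesis
    using assms unfolding vol_eq[OF assms] vol_eq[OF \<open>unitI - S \<in> sets borel\<close> Diff_subset]
    by (simp add: min_ennreal volW_eq_vol)
qed

lemma expansion_bound_cheeger: "expansion_bound (cheeger W)"
  unfolding expansion_bound_def
proof (intro ballI impI)
  fix S assume S: "S \<in> sets borel" "S \<subseteq> unitI"
  then have S': "unitI - S \<in> sets borel" "unitI - S \<subseteq> unitI" by auto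
  have "measure lborel (unitI - S) = 1 - measure lborel S"
    using S by (subst measure_Diff) (auto simp: emeasure_mono le_less_trans)
  moreover have "measure lebesgue S = measure lborel S" using S by simp
  ultimately consider "measure lborel S = 0" | "measure lborel (unitI - S) = 0"
    | "0 < measure lebesgue S" "measure lebesgue S < 1"
    using measure_nonneg[of lborel S] measure_nonneg[of lborel "unitI - S"]
    by (smt (verit))
  then show "ennreal (cheeger W) * min (vol S) (vol (unitI - S)) \<le> edges S (unitI - S)"
  proof cases
    case 1
    then show ?thesis using vol_null[OF S] by simp
  next
    case 2
    then show ?thesis using vol_null[OF S'] by simp
  next
    case 3
    define mn where "mn = min (volW W S) (volW W (unitI - S))"
    have "0 \<le> mn" using S graphon by (simp add: mn_def volW_def eW_nonneg)
    have "cheeger W * mn \<le> eW W S (unitI - S)"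
    proof (cases "mn = 0")
      case False
      have "cheeger W \<le> eW W S (unitI - S) / mn"
        using cheeger_le[OF graphon _ 3] S by (simp add: mn_def meas_subset_def)
      with False \<open>0 \<le> mn\<close> show ?thesis by (simp add: pos_le_divide_eq)
    qed (use S graphon in \<open>simp add: eW_nonneg\<close>)
    moreover have "edges S (unitI - S) < \<infinity>"
      using edges_le_vol[OF Diff_subset] vol_finite by (rule le_less_trans)
    then have "ennreal (eW W S (unitI - S)) = edges S (unitI - S)"
      using eW_eq_edges[OF S S'] by (simp add: less_top)
    ultimately have "ennreal (cheeger W * mn) \<le> edges S (unitI - S)"
      using ennreal_leI by metis
    then show ?thesis
      using min_vol_eq_volW[OF S] \<open>0 \<le> mn\<close> cheeger_nonneg[OF graphon]
      by (simp add: mn_def ennreal_mult)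
  qed
qed

context
  fixes f u :: "real \<Rightarrow> real"
  assumes u_measurable[measurable]: "u \<in> borel_measurable lborel"
    and f_AE_eq_u: "AE x in lborel. x \<in> unitI \<longrightarrow> f x = u x"
begin

lemma vnorm2_eq_integral: "vnorm2 W f = (\<integral>x. (u x)\<^sup>2 * deg x \<partial>lborel)"
  unfolding vnorm2_def
  by (rule lebesgue_on_eq_lborel_AE(1))
     (use f_AE_eq_u degW_AE_eq_deg in \<open>auto simp: deg_outside elim: eventually_rev_mp\<close>)

lemma integrable_sq_degW_iff:
  "integrable (lebesgue_on unitI) (\<lambda>x. (f x)\<^sup>2 * degW W x) \<longleftrightarrow> integrable lborel (\<lambda>x. (u x)\<^sup>2 * deg x)"
  by (rule lebesgue_on_eq_lborel_AE(2))
     (use f_AE_eq_u degW_AE_eq_deg in \<open>auto simp: deg_outside elim: eventually_rev_mp\<close>)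

lemma integral_degW_eq_integral:
  "(\<integral>x. f x * degW W x \<partial>lebesgue_on unitI) = (\<integral>x. u x * deg x \<partial>lborel)"
  by (rule lebesgue_on_eq_lborel_AE(1))
     (use f_AE_eq_u degW_AE_eq_deg in \<open>auto simp: deg_outside elim: eventually_rev_mp\<close>)

lemma AE_enorm2_inner_eq:
  "AE x in lborel. x \<in> unitI \<longrightarrow>
     (\<integral>y. (f y - f x)\<^sup>2 * W x y \<partial>lebesgue_on {x..1})
       = enn2real (\<integral>\<^sup>+y. ennreal (of_bool (x \<le> y) * ((u y - u x)\<^sup>2 * w (x, y))) \<partial>lborel)"
  using f_AE_eq_u AE_sections_W_eq_w
proof eventually_elim
  case (elim x)
  show ?case
  proof
    assume x: "x \<in> unitI"
    have "(\<integral>y. (f y - f x)\<^sup>2 * W x y \<partial>lebesgue_on {x..1})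
        = (\<integral>y. of_bool (x \<le> y) * ((u y - u x)\<^sup>2 * w (x, y)) \<partial>lborel)"
    proof (rule lebesgue_on_eq_lborel_AE(1))
      have W_eq_w: "AE y in lborel. y \<in> unitI \<longrightarrow> W x y = w (x, y)" and "f x = u x"
        using elim x by auto
      from f_AE_eq_u W_eq_w show "AE y in lborel. y \<in> {x..1} \<longrightarrow>
          (f y - f x)\<^sup>2 * W x y = of_bool (x \<le> y) * ((u y - u x)\<^sup>2 * w (x, y))"
        by eventually_elim (use \<open>f x = u x\<close> x in auto)
      show "y \<notin> {x..1} \<Longrightarrow> of_bool (x \<le> y) * ((u y - u x)\<^sup>2 * w (x, y)) = 0" for y
        using w_outside[of "(x, y)"] by auto
    qed simp_all
    then show "(\<integral>y. (f y - f x)\<^sup>2 * W x y \<partial>lebesgue_on {x..1})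
       = enn2real (\<integral>\<^sup>+y. ennreal (of_bool (x \<le> y) * ((u y - u x)\<^sup>2 * w (x, y))) \<partial>lborel)"
      by (subst (asm) integral_eq_nn_integral) (auto simp: w_nonneg)
  qed
qed

lemma enorm2_eq_energy_ordered:
  assumes finite: "energy_ordered u < \<infinity>"
  shows "enorm2 W f = enn2real (energy_ordered u)"
proof -
  define H where "H x = (\<integral>\<^sup>+y. ennreal (of_bool (x \<le> y) * ((u y - u x)\<^sup>2 * w (x, y))) \<partial>lborel)" for x
  have [measurable]: "H \<in> borel_measurable lborel" unfolding H_def by measurable
  have energy_eq: "energy_ordered u = (\<integral>\<^sup>+x. H x \<partial>lborel)"
    unfolding energy_ordered_def H_def ..
  have "enorm2 W f = (\<integral>x. enn2real (H x) \<partial>lborel)"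
    unfolding enorm2_def H_def
    by (rule lebesgue_on_eq_lborel_AE(1)[OF _ _ AE_enorm2_inner_eq]) (auto simp: w_outside)
  also have "\<dots> = enn2real (\<integral>\<^sup>+x. ennreal (enn2real (H x)) \<partial>lborel)"
    by (subst integral_eq_nn_integral) auto
  also have "(\<integral>\<^sup>+x. ennreal (enn2real (H x)) \<partial>lborel) = (\<integral>\<^sup>+x. H x \<partial>lborel)"
    using nn_integral_PInf_AE[of H lborel] finite energy_eq
    by (intro nn_integral_cong_AE) (auto simp: less_top elim: eventually_mono)
  finally show ?thesis using energy_eq by simp
qed

end

lemma rayleigh_quotient_ge:
  assumes f: "L2nu W f" and mean_zero: "(\<integral>x. f x * degW W x \<partial>lebesgue_on unitI) = 0"
    and "vnorm2 W f \<noteq> 0"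
  shows "(cheeger W)\<^sup>2 / 2 \<le> enorm2 W f / vnorm2 W f"
proof -
  obtain u where u[measurable]: "u \<in> borel_measurable lborel"
    and f_AE_eq_u: "AE x in lborel. x \<in> unitI \<longrightarrow> f x = u x"
    using lebesgue_on_borel_version[of unitI f] f unfolding L2nu_def by auto
  let ?V = "\<integral>x. (u x)\<^sup>2 * deg x \<partial>lborel"
  have sq: "integrable lborel (\<lambda>x. (u x)\<^sup>2 * deg x)"
    using f integrable_sq_degW_iff[OF u f_AE_eq_u] unfolding L2nu_def by simp
  have "0 \<le> ?V" by (simp add: deg_nonneg)
  then have "0 < ?V"
    using \<open>vnorm2 W f \<noteq> 0\<close> vnorm2_eq_integral[OF u f_AE_eq_u] by simp
  have "energy_ordered u \<le> 4 * nu_norm2 u"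
    using energy_ordered_le_energy energy_le_nu_norm2[OF u] by (rule order_trans)
  then have finite: "energy_ordered u < \<infinity>"
    using nu_norm2_eq_integral[OF sq] by (simp add: le_less_trans ennreal_mult_less_top)
  have "ennreal ((cheeger W)\<^sup>2 * ?V) \<le> energy u"
    using mean_zero integral_degW_eq_integral[OF u f_AE_eq_u]
    by (intro energy_bound_mean_zero[OF u cheeger_nonneg[OF graphon] expansion_bound_cheeger sq]) simp
  also have "\<dots> \<le> 2 * energy_ordered u" by (rule energy_le_energy_ordered[OF u])
  finally have "enn2real (ennreal ((cheeger W)\<^sup>2 * ?V)) \<le> enn2real (2 * energy_ordered u)"
    by (rule enn2real_mono) (use finite in \<open>simp add: ennreal_mult_less_top\<close>)
  then have "(cheeger W)\<^sup>2 * ?V \<le> 2 * enn2real (energy_ordered u)"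
    using \<open>0 \<le> ?V\<close> by (simp add: enn2real_mult)
  then show ?thesis
    using \<open>0 < ?V\<close> vnorm2_eq_integral[OF u f_AE_eq_u] enorm2_eq_energy_ordered[OF u f_AE_eq_u finite]
    by (simp add: pos_le_divide_eq)
qed

lemma integral_indicator_deg:
  assumes [measurable]: "A \<in> sets borel"
  shows "integrable lborel (\<lambda>x. indicator A x * deg x)"
    and "(\<integral>x. indicator A x * deg x \<partial>lborel) = enn2real (vol A)"
proof -
  show "integrable lborel (\<lambda>x. indicator A x * deg x)"
  proof (rule Bochner_Integration.integrable_bound[OF integrable_deg])
    show "AE x in lborel. norm (indicator A x * deg x) \<le> norm (deg x)"
      using deg_nonneg by (auto simp: indicator_def)
  qed simp
  have "(\<integral>x. indicator A x * deg x \<partial>lborel) = enn2real (\<integral>\<^sup>+x. ennreal (indicator A x * deg x) \<partial>lborel)"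
    by (rule integral_eq_nn_integral) (auto simp: deg_nonneg)
  also have "(\<integral>\<^sup>+x. ennreal (indicator A x * deg x) \<partial>lborel) = vol A"
    unfolding vol_def
    by (intro nn_integral_cong) (simp add: degn_eq_deg ennreal_mult deg_nonneg ennreal_indicator)
  finally show "(\<integral>x. indicator A x * deg x \<partial>lborel) = enn2real (vol A)" .
qed

text \<open>This is the only use of connectedness: it makes the set of Rayleigh quotients in
  \<^const>\<open>lambdaW\<close> nonempty, whose infimum would otherwise be unspecified.\<close>

lemma exists_mean_zero_test_function:
  assumes "connected_graphon W"
  shows "\<exists>f. L2nu W f \<and> (\<integral>x. f x * degW W x \<partial>lebesgue_on unitI) = 0 \<and> vnorm2 W f \<noteq> 0"
proof -
  define A :: "real set" where "A = {0..1/2}"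
  define B :: "real set" where "B = unitI - A"
  have A: "A \<in> sets borel" "A \<subseteq> unitI" and B: "B \<in> sets borel" "B \<subseteq> unitI"
    unfolding A_def B_def by auto
  have "meas_subset A" "measure lebesgue A = 1/2"
    unfolding meas_subset_def A_def by (auto simp: measure_completion)
  then have "eW W A B \<noteq> 0" using assms unfolding connected_graphon_def B_def by auto
  then have "0 < edges A B" using eW_eq_edges[OF A B] by (auto simp: zero_less_iff_neq_zero)
  then have "0 < vol A" "0 < vol B"
    using edges_le_vol[OF B(2), of A] edges_le_vol[OF A(2), of B] edges_swap[OF A(1) B(1)]
    by (auto intro: less_le_trans)
  define a where "a = enn2real (vol A)"
  define b where "b = enn2real (vol B)"
  have "0 < a" "0 < b"
    unfolding a_def b_def using \<open>0 < vol A\<close> \<open>0 < vol B\<close> vol_finite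
    by (simp_all add: enn2real_positive_iff)
  define f where "f x = (if x \<le> 1/2 then b else - a)" for x :: real
  have [measurable]: "f \<in> borel_measurable lborel" unfolding f_def by measurable
  have f_AE_eq_f: "AE x in lborel. x \<in> unitI \<longrightarrow> f x = f x" by simp
  have f_deg: "f x * deg x = b * (indicator A x * deg x) - a * (indicator B x * deg x)"
    and f_sq_deg: "(f x)\<^sup>2 * deg x = b\<^sup>2 * (indicator A x * deg x) + a\<^sup>2 * (indicator B x * deg x)" for x
    by (cases "x \<in> unitI"; simp add: f_def A_def B_def indicator_def deg_outside)+
  note int_A = integral_indicator_deg[OF A(1)] and int_B = integral_indicator_deg[OF B(1)]
  have "f \<in> borel_measurable (lebesgue_on unitI)"
    by (rule lebesgue_on_eq_lborel_AE(3)[of unitI "\<lambda>x. indicator unitI x * f x"]) auto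
  moreover have "integrable lborel (\<lambda>x. (f x)\<^sup>2 * deg x)"
    unfolding f_sq_deg using int_A int_B by simp
  moreover have "(\<integral>x. f x * deg x \<partial>lborel) = 0"
    unfolding f_deg using int_A int_B by (simp add: a_def b_def)
  moreover have "(\<integral>x. (f x)\<^sup>2 * deg x \<partial>lborel) = b\<^sup>2 * a + a\<^sup>2 * b"
    unfolding f_sq_deg using int_A int_B by (simp add: a_def b_def)
  moreover have "0 < b\<^sup>2 * a + a\<^sup>2 * b" using \<open>0 < a\<close> \<open>0 < b\<close> by (simp add: add_pos_pos)
  ultimately have "L2nu W f" "(\<integral>x. f x * degW W x \<partial>lebesgue_on unitI) = 0" "vnorm2 W f \<noteq> 0"
    unfolding L2nu_def
    using vnorm2_eq_integral[OF _ f_AE_eq_f] integrable_sq_degW_iff[OF _ f_AE_eq_f]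
      integral_degW_eq_integral[OF _ f_AE_eq_f]
    by simp_all
  then show ?thesis by blast
qed

lemma half_cheeger_sq_le_lambdaW:
  assumes "connected_graphon W"
  shows "(cheeger W)\<^sup>2 / 2 \<le> lambdaW W"
  unfolding lambdaW_def
proof (rule cInf_greatest)
  show "{enorm2 W f / vnorm2 W f | f. L2nu W f \<and>
      (\<integral>x. f x * degW W x \<partial>lebesgue_on unitI) = 0 \<and> vnorm2 W f \<noteq> 0} \<noteq> {}"
    using exists_mean_zero_test_function[OF assms] by blast
next
  fix r assume "r \<in> {enorm2 W f / vnorm2 W f | f. L2nu W f \<and>
      (\<integral>x. f x * degW W x \<partial>lebesgue_on unitI) = 0 \<and> vnorm2 W f \<noteq> 0}"
  then obtain f where "r = enorm2 W f / vnorm2 W f" "L2nu W f"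
    "(\<integral>x. f x * degW W x \<partial>lebesgue_on unitI) = 0" "vnorm2 W f \<noteq> 0"
    by blast
  then show "(cheeger W)\<^sup>2 / 2 \<le> r" using rayleigh_quotient_ge by simp
qed

end

theorem mainTheorem2:
  fixes W :: "real \<Rightarrow> real \<Rightarrow> real"
  assumes "graphon W" and "connected_graphon W"
  shows "lambdaW W \<ge> (cheeger W)\<^sup>2 / 8"
proof -
  obtain w where "graphon_borel_version W w"
    using graphon_has_borel_version[OF assms(1)] by blast
  then interpret graphon_borel_version W w .
  have "(cheeger W)\<^sup>2 / 2 \<le> lambdaW W"
    by (rule half_cheeger_sq_le_lambdaW[OF assms(2)])
  then show ?thesis
    using zero_le_power2[of "cheeger W"] by linarith
qed

end
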